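(* (1) For any $\lambda\in(0,1)$ and $\mu\in[0,1)$: $\mathbb{L}^{>\lambda}(\mathrm{QBA}|\mathrm{ND})\not\subseteq\mathbb{L}^{>\mu}(\mathrm{QBA}|\mathrm{D})$. (2) For any $\lambda\in[0,1)$: $\mathbb{L}^{=1}(\mathrm{QBA}|\mathrm{ND})\not\subseteq\mathbb{L}^{>\lambda}(\mathrm{QBA}|\mathrm{D})$. (3) For any $\lambda\in[0,1)$: $\mathbb{L}^{=1}(\mathrm{QBA}|\mathrm{D})\not\subseteq\mathbb{L}^{>\lambda}(\mathrm{QBA}|\mathrm{ND})$.
   Context: A quantum automaton is a tuple $\mathcal{A}=(\mathcal{H},|s_0\rangle,\Sigma,\{U_\sigma:\sigma\in\Sigma\},F)$ where $\mathcal{H}$ is a finite-dimensional complex Hilbert space, $|s_0\rangle$ a unit vector, $\Sigma$ a finite alphabet, each $U_\sigma$ unitary, and $F$ a subspace. Let $w=\sigma_1\sigma_2\cdots\in\Sigma^\omega$. Non-disturbing: the run is $|s_n\rangle=U_{\sigma_n}\cdots U_{\sigma_1}|s_0\rangle$ and $f^{\mathrm{ND}}_{\mathcal{A}}(w)=\sup_{|\psi\rangle}\sup_{\{n_i\}}\inf_{i\ge1}|\langle\psi|s_{n_i}\rangle|^2$ (sup over unit $|\psi\rangle\in F$ and strictly increasing sequences $0\le n_1<n_2<\cdots$). Disturbing: for unit $|\psi\rangle\in F$ and checkpoints $\{n_i\}$, the run is $|s_0\rangle$ and for $n\ge1$: $|s_n\rangle=U_{\sigma_n}|\psi\rangle$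 if $n-1=n_i$ for some $i$, else $|s_n\rangle=U_{\sigma_n}|s_{n-1}\rangle$; $f^{\mathrm{D}}_{\mathcal{A}}(w)=\sup_{|\psi\rangle}\sup_{\{n_i\}}\inf_{i\ge1}|\langle\psi|s_{n_i}\rangle|^2$ with this run. For $X\in\{\mathrm{ND},\mathrm{D}\}$: $\mathcal{L}^{>\lambda}(\mathcal{A}|X)=\{w:f^X_{\mathcal{A}}(w)>\lambda\}$, $\mathcal{L}^{=1}(\mathcal{A}|X)=\{w:f^X_{\mathcal{A}}(w)=1\}$, and $\mathbb{L}^{>\lambda}(\mathrm{QBA}|X)$, $\mathbb{L}^{=1}(\mathrm{QBA}|X)$ are the classes of all such languages over all quantum automata $\mathcal{A}$. *)

theory Defs
  imports "Jordan_Normal_Form.Matrix"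
begin

text \<open>Alphabets are finite sets of natural numbers;
  omega-words are functions nat => nat, with w 0 the first letter sigma_1.\<close>

definition braket :: "complex vec \<Rightarrow> complex vec \<Rightarrow> complex" where
  "braket \<psi> s = scalar_prod (map_vec cnj \<psi>) s"

definition adj :: "complex mat \<Rightarrow> complex mat" where
  "adj U = transpose_mat (map_mat cnj U)"

definition unitary_mat :: "nat \<Rightarrow> complex mat \<Rightarrow> bool" where
  "unitary_mat n U \<longleftrightarrow> U \<in> carrier_mat n n \<and> U * adj U = 1\<^sub>m n \<and> adj U * U = 1\<^sub>m n"

definition unit_vec :: "nat \<Rightarrow> complex vec \<Rightarrow> bool" where
  "unit_vec n v \<longleftrightarrow> v \<in> carrier_vec n \<and> braket v v = 1"

definition is_subspace :: "nat \<Rightarrow> complex vec set \<Rightarrow> bool" where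
  "is_subspace n F \<longleftrightarrow> F \<subseteq> carrier_vec n \<and> 0\<^sub>v n \<in> F \<and>
     (\<forall>u\<in>F. \<forall>v\<in>F. u + v \<in> F) \<and> (\<forall>c. \<forall>v\<in>F. c \<cdot>\<^sub>v v \<in> F)"

record qauto =
  qdim :: nat
  qinit :: "complex vec"
  qtrans :: "nat \<Rightarrow> complex mat"
  qacc :: "complex vec set"

definition qauto_wf :: "nat set \<Rightarrow> qauto \<Rightarrow> bool" where
  "qauto_wf \<Sigma> A \<longleftrightarrow> unit_vec (qdim A) (qinit A) \<and>
     (\<forall>\<sigma>\<in>\<Sigma>. unitary_mat (qdim A) (qtrans A \<sigma>)) \<and> is_subspace (qdim A) (qacc A)"

primrec nd_run :: "qauto \<Rightarrow> (nat \<Rightarrow> nat) \<Rightarrow> nat \<Rightarrow> complex vec" where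
  "nd_run A w 0 = qinit A"
| "nd_run A w (Suc k) = qtrans A (w k) *\<^sub>v nd_run A w k"

text \<open>Disturbing run for target psi and checkpoints ns (ns 0 = n_1):
  s_{k+1} = U_{sigma_{k+1}} psi if k is a checkpoint, else U_{sigma_{k+1}} s_k.\<close>
primrec d_run :: "qauto \<Rightarrow> (nat \<Rightarrow> nat) \<Rightarrow> complex vec \<Rightarrow> (nat \<Rightarrow> nat) \<Rightarrow> nat \<Rightarrow> complex vec" where
  "d_run A w \<psi> ns 0 = qinit A"
| "d_run A w \<psi> ns (Suc k) =
     qtrans A (w k) *\<^sub>v (if k \<in> range ns then \<psi> else d_run A w \<psi> ns k)"

datatype mode = ND | D

definition run :: "mode \<Rightarrow> qauto \<Rightarrow> (nat \<Rightarrow> nat) \<Rightarrow> complex vec \<Rightarrow> (nat \<Rightarrow> nat) \<Rightarrow> nat \<Rightarrow> complex vec" where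
  "run X A w \<psi> ns = (case X of ND \<Rightarrow> nd_run A w | D \<Rightarrow> d_run A w \<psi> ns)"

text \<open>Acceptance value: sup over unit psi in F and strictly increasing checkpoint
  sequences of inf_i |<psi|s_{n_i}>|^2. The supremum of the empty family
  (F = {0}) is taken to be 0 (inserting 0 does not change it otherwise, all values being >= 0).\<close>
definition fval :: "mode \<Rightarrow> qauto \<Rightarrow> (nat \<Rightarrow> nat) \<Rightarrow> real" where
  "fval X A w = Sup (insert 0
     {Inf (range (\<lambda>i. (cmod (braket \<psi> (run X A w \<psi> ns (ns i))))\<^sup>2)) | \<psi> ns.
        \<psi> \<in> qacc A \<and> unit_vec (qdim A) \<psi> \<and> strict_mono ns})"

definition lang_gt :: "mode \<Rightarrow> nat set \<Rightarrow> qauto \<Rightarrow> real \<Rightarrow> (nat \<Rightarrow> nat) set" where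
  "lang_gt X \<Sigma> A l = {w. (\<forall>k. w k \<in> \<Sigma>) \<and> fval X A w > l}"

definition lang_eq1 :: "mode \<Rightarrow> nat set \<Rightarrow> qauto \<Rightarrow> (nat \<Rightarrow> nat) set" where
  "lang_eq1 X \<Sigma> A = {w. (\<forall>k. w k \<in> \<Sigma>) \<and> fval X A w = 1}"

definition QBA_gt :: "mode \<Rightarrow> nat set \<Rightarrow> real \<Rightarrow> (nat \<Rightarrow> nat) set set" where
  "QBA_gt X \<Sigma> l = {lang_gt X \<Sigma> A l | A. qauto_wf \<Sigma> A}"

definition QBA_eq1 :: "mode \<Rightarrow> nat set \<Rightarrow> (nat \<Rightarrow> nat) set set" where
  "QBA_eq1 X \<Sigma> = {lang_eq1 X \<Sigma> A | A. qauto_wf \<Sigma> A}"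

end

theory Submission
  imports Defs "HOL-Analysis.Kronecker_Approximation_Theorem"
begin

text \<open>
  The separating automaton lives on \<open>\<complex>\<^sup>2\<close>: letter 1 rotates by
  \<open>\<theta> = arccos (3/5)\<close>, letter 0 acts trivially and the accepting space is spanned by
  \<open>e\<^sub>0\<close>, so a state at angle \<open>\<phi>\<close> scores \<open>cos\<^sup>2 \<phi>\<close>. Since
  \<open>(3 + 4i)\<^sup>j = 5\<^sup>j (cos j\<theta> + i sin j\<theta>)\<close> has imaginary part \<open>\<equiv> 4 (mod 5)\<close>,
  \<open>\<theta>/\<pi>\<close> is irrational, and Kronecker's theorem makes \<open>cos\<^sup>2 (j\<theta>)\<close> come arbitrarily close to 0 and 1.
  Thus \<open>0\<^sup>\<omega>\<close> has ND-value 1 while \<open>0\<^sup>k 1\<^sup>j 0\<^sup>\<omega>\<close> has ND-value at most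
  \<open>cos\<^sup>2 (j\<theta>)\<close>, and \<open>1\<^sup>\<omega>\<close> has D-value 1 while \<open>1\<^sup>n 0\<^sup>\<omega>\<close> has D-value below 1.

  Any other automaton is recurrent: the orbit of a vector under a unitary returns arbitrarily
  close to it infinitely often. So a D-accepted \<open>0\<^sup>\<omega>\<close> stays accepted after inserting
  \<open>1\<^sup>t\<^sup>d\<close> (every block \<open>1\<^sup>d\<close> read from the restart vector is a good checkpoint),
  and an ND-accepted \<open>1\<^sup>\<omega>\<close> stays accepted when truncated to \<open>1\<^sup>n 0\<^sup>\<omega>\<close>; this
  contradicts the values above.
\<close>

(* Kronecker's theorem brings in Finite_Cartesian_Product, whose names clash with the
   vectors and matrices of Jordan_Normal_Form. *)
hide_type (open) Finite_Cartesian_Product.vec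
hide_const (open) Finite_Cartesian_Product.vec Finite_Cartesian_Product.mat
unbundle no vec_syntax

definition vec_norm :: "complex vec \<Rightarrow> real" where
  "vec_norm v = L2_set (\<lambda>i. cmod (v $ i)) {..<dim_vec v}"

lemma braket_sum:
  assumes "dim_vec x = dim_vec y"
  shows "braket x y = (\<Sum>i<dim_vec y. cnj (x $ i) * y $ i)"
  unfolding braket_def scalar_prod_def using assms
  by (auto simp: atLeast0LessThan intro!: sum.cong)

lemma braket_self: "braket v v = complex_of_real ((vec_norm v)\<^sup>2)"
proof -
  have "cnj z * z = complex_of_real ((cmod z)\<^sup>2)" for z :: complex
    by (simp only: cmod_power2) (simp add: complex_eq_iff power2_eq_square)
  then show ?thesis
    by (simp add: braket_sum vec_norm_def L2_set_def sum_nonneg)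
qed

lemma vec_norm_nonneg [simp]: "0 \<le> vec_norm v"
  by (simp add: vec_norm_def)

lemma unit_vec_iff_norm: "unit_vec n v \<longleftrightarrow> v \<in> carrier_vec n \<and> vec_norm v = 1"
proof -
  have "braket v v = 1 \<longleftrightarrow> (vec_norm v)\<^sup>2 = 1"
    unfolding braket_self by (rule of_real_eq_1_iff)
  also have "\<dots> \<longleftrightarrow> vec_norm v = 1"
    using power2_eq_iff_nonneg[of "vec_norm v" 1] by simp
  finally show ?thesis
    by (simp add: unit_vec_def)
qed

lemma cmod_braket_le:
  assumes "dim_vec x = dim_vec y"
  shows "cmod (braket x y) \<le> vec_norm x * vec_norm y"
proof -
  have "cmod (braket x y) \<le> (\<Sum>i<dim_vec y. cmod (cnj (x $ i) * y $ i))"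
    unfolding braket_sum[OF assms] by (rule norm_sum)
  also have "\<dots> = (\<Sum>i<dim_vec y. \<bar>cmod (x $ i)\<bar> * \<bar>cmod (y $ i)\<bar>)"
    by (simp add: norm_mult)
  also have "\<dots> \<le> vec_norm x * vec_norm y"
    using L2_set_mult_ineq[of "\<lambda>i. cmod (x $ i)" "\<lambda>i. cmod (y $ i)"] assms
    by (simp add: vec_norm_def)
  finally show ?thesis .
qed

lemma cmod_vec_index_le: "i < dim_vec v \<Longrightarrow> cmod (v $ i) \<le> vec_norm v"
  unfolding vec_norm_def by (rule member_le_L2_set) auto

lemma braket_diff:
  assumes "dim_vec x = dim_vec y" "dim_vec x = dim_vec z"
  shows "braket x (y - z) = braket x y - braket x z"
  using assms by (simp add: braket_sum algebra_simps sum_subtractf)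

lemma cmod_braket_diff_le:
  assumes "unit_vec n \<psi>" "x \<in> carrier_vec n" "y \<in> carrier_vec n"
  shows "cmod (braket \<psi> x) - vec_norm (y - x) \<le> cmod (braket \<psi> y)"
proof -
  have "cmod (braket \<psi> x) - cmod (braket \<psi> y) \<le> cmod (braket \<psi> y - braket \<psi> x)"
    by (metis norm_minus_commute norm_triangle_ineq2)
  also have "braket \<psi> y - braket \<psi> x = braket \<psi> (y - x)"
    using assms by (simp add: braket_diff unit_vec_def)
  also have "cmod \<dots> \<le> vec_norm (y - x)"
    using cmod_braket_le[of \<psi> "y - x"] assms by (simp add: unit_vec_iff_norm)
  finally show ?thesis by simp
qed

lemma unitary_carrier: "unitary_mat n U \<Longrightarrow> x \<in> carrier_vec n \<Longrightarrow> U *\<^sub>v x \<in> carrier_vec n"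
  unfolding unitary_mat_def by auto

lemma unitary_braket:
  assumes U: "unitary_mat n U" and x: "x \<in> carrier_vec n" and y: "y \<in> carrier_vec n"
  shows "braket (U *\<^sub>v x) (U *\<^sub>v y) = braket x y"
proof -
  have Uc: "U \<in> carrier_mat n n" and inv: "adj U * U = 1\<^sub>m n"
    using U unfolding unitary_mat_def by auto
  have adjc: "adj U \<in> carrier_mat n n"
    using Uc unfolding adj_def by auto
  have "transpose_mat (adj U) = map_mat cnj U"
    unfolding adj_def by simp
  moreover have "map_vec cnj (U *\<^sub>v x) = map_mat cnj U *\<^sub>v map_vec cnj x"
    using Uc x by (intro eq_vecI) (auto simp: scalar_prod_def row_def cnj_sum)
  ultimately have "map_vec cnj (U *\<^sub>v x) = transpose_mat (adj U) *\<^sub>v map_vec cnj x"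
    by simp
  then have "braket (U *\<^sub>v x) (U *\<^sub>v y) = (transpose_mat (adj U) *\<^sub>v map_vec cnj x) \<bullet> (U *\<^sub>v y)"
    unfolding braket_def by simp
  also have "\<dots> = map_vec cnj x \<bullet> (adj U *\<^sub>v (U *\<^sub>v y))"
    by (rule transpose_vec_mult_scalar[OF adjc]) (use Uc x y in auto)
  also have "adj U *\<^sub>v (U *\<^sub>v y) = (adj U * U) *\<^sub>v y"
    using adjc Uc y by simp
  also have "\<dots> = y"
    using inv y by simp
  finally show ?thesis
    unfolding braket_def .
qed

lemma unitary_vec_norm:
  assumes "unitary_mat n U" "x \<in> carrier_vec n"
  shows "vec_norm (U *\<^sub>v x) = vec_norm x"
proof -
  have "(vec_norm (U *\<^sub>v x))\<^sup>2 = (vec_norm x)\<^sup>2"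
    using unitary_braket[OF assms assms(2)] by (simp only: braket_self of_real_eq_iff)
  then show ?thesis
    by (simp add: power2_eq_iff_nonneg)
qed

lemma unitary_unit_vec: "unitary_mat n U \<Longrightarrow> unit_vec n x \<Longrightarrow> unit_vec n (U *\<^sub>v x)"
  by (simp add: unit_vec_def unitary_braket unitary_carrier)

lemma sq_cmod_braket_le_1:
  assumes "unit_vec n \<psi>" "unit_vec n s"
  shows "(cmod (braket \<psi> s))\<^sup>2 \<le> 1"
proof -
  have "cmod (braket \<psi> s) \<le> 1"
    using cmod_braket_le[of \<psi> s] assms unfolding unit_vec_iff_norm by (metis carrier_vecD mult_1)
  then show ?thesis
    by (simp add: power_le_one)
qed

definition mat_iter :: "complex mat \<Rightarrow> nat \<Rightarrow> complex vec \<Rightarrow> complex vec" where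
  "mat_iter U k = (\<lambda>v. U *\<^sub>v v) ^^ k"

lemma mat_iter_0 [simp]: "mat_iter U 0 x = x"
  and mat_iter_Suc: "mat_iter U (Suc k) x = U *\<^sub>v mat_iter U k x"
  by (simp_all add: mat_iter_def)

lemma mat_iter_add: "mat_iter U (a + b) x = mat_iter U a (mat_iter U b x)"
  by (simp add: mat_iter_def funpow_add)

lemma mat_iter_carrier: "unitary_mat n U \<Longrightarrow> x \<in> carrier_vec n \<Longrightarrow> mat_iter U k x \<in> carrier_vec n"
  by (induction k) (auto simp: mat_iter_Suc unitary_carrier)

lemma mat_iter_vec_norm:
  "unitary_mat n U \<Longrightarrow> x \<in> carrier_vec n \<Longrightarrow> vec_norm (mat_iter U k x) = vec_norm x"
  by (induction k) (auto simp: mat_iter_Suc unitary_vec_norm mat_iter_carrier)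

lemma mat_iter_diff:
  assumes U: "unitary_mat n U" and x: "x \<in> carrier_vec n" and y: "y \<in> carrier_vec n"
  shows "mat_iter U k (x - y) = mat_iter U k x - mat_iter U k y"
proof (induction k)
  case (Suc k)
  have "U \<in> carrier_mat n n" using U unfolding unitary_mat_def by auto
  with Suc show ?case
    by (simp add: mat_iter_Suc mult_minus_distrib_mat_vec mat_iter_carrier[OF U] x y)
qed simp

section \<open>Recurrence of unitary orbits\<close>

definition grid :: "nat \<Rightarrow> complex vec \<Rightarrow> (int \<times> int) list" where
  "grid N v = map (\<lambda>i. (\<lfloor>real N * Re (v $ i)\<rfloor>, \<lfloor>real N * Im (v $ i)\<rfloor>)) [0..<dim_vec v]"

lemma finite_grid_image: "finite (grid N ` {v \<in> carrier_vec n. vec_norm v \<le> R})"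
proof -
  define S where "S = {\<lfloor>- (real N * R)\<rfloor>..\<lfloor>real N * R\<rfloor>}"
  have floor_bound: "\<lfloor>real N * t\<rfloor> \<in> S" if "\<bar>t\<bar> \<le> R" for t
  proof -
    have "\<bar>real N * t\<bar> = real N * \<bar>t\<bar>"
      by (simp add: abs_mult)
    also have "\<dots> \<le> real N * R"
      using that by (rule mult_left_mono) simp
    finally have "- (real N * R) \<le> real N * t" "real N * t \<le> real N * R"
      by (simp_all add: abs_le_iff)
    then show ?thesis
      by (simp add: S_def floor_mono)
  qed
  have "grid N v \<in> {xs. set xs \<subseteq> S \<times> S \<and> length xs = n}"
    if "v \<in> carrier_vec n" "vec_norm v \<le> R" for v
  proof -
    have "\<bar>Re (v $ i)\<bar> \<le> R" "\<bar>Im (v $ i)\<bar> \<le> R" if "i < dim_vec v" for i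
      using cmod_vec_index_le[OF that] abs_Re_le_cmod abs_Im_le_cmod \<open>vec_norm v \<le> R\<close>
      by (meson order_trans)+
    then show ?thesis
      using that(1) floor_bound unfolding grid_def by auto
  qed
  then have "grid N ` {v \<in> carrier_vec n. vec_norm v \<le> R}
      \<subseteq> {xs. set xs \<subseteq> S \<times> S \<and> length xs = n}"
    by blast
  then show ?thesis
    by (rule finite_subset) (simp add: finite_lists_length_eq S_def)
qed

lemma vec_norm_diff_le_of_grid_eq:
  assumes "a \<in> carrier_vec n" "b \<in> carrier_vec n" "grid N a = grid N b" "N > 0"
  shows "vec_norm (a - b) \<le> real n * (2 / real N)"
proof -
  have close: "\<bar>u - v\<bar> \<le> 1 / real N" if "\<lfloor>real N * u\<rfloor> = \<lfloor>real N * v\<rfloor>" for u v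
  proof -
    have "\<bar>real N * u - real N * v\<bar> < 1"
      using that by linarith
    then have "real N * \<bar>u - v\<bar> < 1"
      by (simp add: abs_mult flip: right_diff_distrib)
    then show ?thesis
      using assms(4) by (simp add: field_simps)
  qed
  have component: "cmod ((a - b) $ i) \<le> 2 / real N" if "i < n" for i
  proof -
    have "grid N a ! i = grid N b ! i"
      using assms(3) by simp
    then have "\<lfloor>real N * Re (a $ i)\<rfloor> = \<lfloor>real N * Re (b $ i)\<rfloor>"
      "\<lfloor>real N * Im (a $ i)\<rfloor> = \<lfloor>real N * Im (b $ i)\<rfloor>"
      using that assms(1,2) by (simp_all add: grid_def)
    then have "\<bar>Re (a $ i) - Re (b $ i)\<bar> + \<bar>Im (a $ i) - Im (b $ i)\<bar> \<le> 1 / real N + 1 / real N"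
      by (intro add_mono close)
    then show ?thesis
      using cmod_le[of "a $ i - b $ i"] that assms(1,2) by simp
  qed
  have dim: "dim_vec (a - b) = n"
    using assms(2) by simp
  have "vec_norm (a - b) \<le> (\<Sum>i<n. cmod ((a - b) $ i))"
    unfolding vec_norm_def dim by (intro L2_set_le_sum) simp
  also have "\<dots> \<le> of_nat (card {..<n}) * (2 / real N)"
    using component by (intro sum_bounded_above) simp
  finally show ?thesis
    by (simp only: card_lessThan)
qed

(* Pigeonhole on the cells of mesh 1/N visited by the orbit: if U^k x and U^k0 x share a cell,
   then U^(k-k0) x is close to x, because U^k0 is an isometry. *)
lemma unitary_recurrence:
  assumes U: "unitary_mat n U" and x: "x \<in> carrier_vec n" and "\<epsilon> > 0"
  shows "infinite {k. 0 < k \<and> vec_norm (mat_iter U k x - x) < \<epsilon>}"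
proof -
  obtain N :: nat where N: "real n * (2 / \<epsilon>) < real N"
    using reals_Archimedean2 by blast
  moreover have "0 \<le> real n * (2 / \<epsilon>)"
    using \<open>\<epsilon> > 0\<close> by simp
  ultimately have "N > 0"
    by linarith
  have mesh: "real n * (2 / real N) < \<epsilon>"
    using N \<open>N > 0\<close> \<open>\<epsilon> > 0\<close> by (simp add: field_simps)
  define orbit where "orbit k = mat_iter U k x" for k
  have orbit: "orbit k \<in> carrier_vec n" "vec_norm (orbit k) = vec_norm x" for k
    unfolding orbit_def using mat_iter_carrier[OF U x] mat_iter_vec_norm[OF U x] by auto
  then have "(grid N \<circ> orbit) ` UNIV \<subseteq> grid N ` {v \<in> carrier_vec n. vec_norm v \<le> vec_norm x}"
    by auto
  then have "finite ((grid N \<circ> orbit) ` UNIV)"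
    using finite_grid_image finite_subset by blast
  then obtain k0 where k0: "infinite {k. grid N (orbit k) = grid N (orbit k0)}"
    using pigeonhole_infinite[of UNIV "grid N \<circ> orbit"] by auto
  show ?thesis
    unfolding infinite_nat_iff_unbounded
  proof
    fix m
    obtain k where k: "k > k0 + m" "grid N (orbit k) = grid N (orbit k0)"
      using k0 unfolding infinite_nat_iff_unbounded by blast
    have iter_carrier: "mat_iter U (k - k0) x \<in> carrier_vec n"
      using mat_iter_carrier[OF U x] .
    have "vec_norm (mat_iter U (k - k0) x - x) = vec_norm (mat_iter U k0 (mat_iter U (k - k0) x - x))"
      using mat_iter_vec_norm[OF U] iter_carrier x by simp
    also have "\<dots> = vec_norm (orbit k - orbit k0)"
      using k(1) by (simp add: mat_iter_diff[OF U iter_carrier x] orbit_def flip: mat_iter_add)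
    also have "\<dots> \<le> real n * (2 / real N)"
      using orbit(1)[of k] orbit(1)[of k0] k(2) \<open>N > 0\<close> by (rule vec_norm_diff_le_of_grid_eq)
    finally have "vec_norm (mat_iter U (k - k0) x - x) < \<epsilon>"
      using mesh by linarith
    then show "\<exists>k'>m. k' \<in> {k. 0 < k \<and> vec_norm (mat_iter U k x - x) < \<epsilon>}"
      using k(1) by (intro exI[of _ "k - k0"]) auto
  qed
qed

lemma wf_unitary: "qauto_wf \<Sigma> A \<Longrightarrow> \<sigma> \<in> \<Sigma> \<Longrightarrow> unitary_mat (qdim A) (qtrans A \<sigma>)"
  unfolding qauto_wf_def by auto

lemma run_unit_vec:
  assumes wf: "qauto_wf \<Sigma> A" and w: "\<forall>k. w k \<in> \<Sigma>" and \<psi>: "unit_vec (qdim A) \<psi>"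
  shows "unit_vec (qdim A) (run X A w \<psi> ns k)"
proof -
  have init: "unit_vec (qdim A) (qinit A)"
    using wf by (simp add: qauto_wf_def)
  have step: "unit_vec (qdim A) (qtrans A (w k) *\<^sub>v v)" if "unit_vec (qdim A) v" for k v
    using wf_unitary[OF wf] w that by (blast intro: unitary_unit_vec)
  have "unit_vec (qdim A) (nd_run A w k)" "unit_vec (qdim A) (d_run A w \<psi> ns k)"
    by (induction k) (simp_all add: init step \<psi>)
  then show ?thesis
    by (cases X) (simp_all add: run_def)
qed

definition checkpoint_val :: "mode \<Rightarrow> qauto \<Rightarrow> (nat \<Rightarrow> nat) \<Rightarrow> complex vec \<Rightarrow> (nat \<Rightarrow> nat) \<Rightarrow> real" where
  "checkpoint_val X A w \<psi> ns = (INF i. (cmod (braket \<psi> (run X A w \<psi> ns (ns i))))\<^sup>2)"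

lemma fval_eq_Sup_checkpoint_val:
  "fval X A w = Sup (insert 0 {checkpoint_val X A w \<psi> ns | \<psi> ns.
     \<psi> \<in> qacc A \<and> unit_vec (qdim A) \<psi> \<and> strict_mono ns})"
  unfolding fval_def checkpoint_val_def ..

lemma checkpoint_val_le: "checkpoint_val X A w \<psi> ns \<le> (cmod (braket \<psi> (run X A w \<psi> ns (ns i))))\<^sup>2"
  unfolding checkpoint_val_def by (rule cINF_lower) (auto intro: bdd_belowI[of _ 0])

lemma checkpoint_val_ge:
  "(\<And>i. c \<le> (cmod (braket \<psi> (run X A w \<psi> ns (ns i))))\<^sup>2) \<Longrightarrow> c \<le> checkpoint_val X A w \<psi> ns"
  unfolding checkpoint_val_def by (rule cINF_greatest) auto

lemma checkpoint_val_le_1: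
  assumes "qauto_wf \<Sigma> A" "\<forall>k. w k \<in> \<Sigma>" "unit_vec (qdim A) \<psi>"
  shows "checkpoint_val X A w \<psi> ns \<le> 1"
  using checkpoint_val_le[of X A w \<psi> ns 0] sq_cmod_braket_le_1[OF assms(3) run_unit_vec[OF assms]]
  by (rule order_trans)

lemma fval_ge_checkpoint_val:
  assumes wf: "qauto_wf \<Sigma> A" and w: "\<forall>k. w k \<in> \<Sigma>"
    and \<psi>: "\<psi> \<in> qacc A" "unit_vec (qdim A) \<psi>" and ns: "strict_mono ns"
  shows "checkpoint_val X A w \<psi> ns \<le> fval X A w"
  unfolding fval_eq_Sup_checkpoint_val
proof (rule cSup_upper)
  show "bdd_above (insert 0 {checkpoint_val X A w \<psi> ns | \<psi> ns.
      \<psi> \<in> qacc A \<and> unit_vec (qdim A) \<psi> \<and> strict_mono ns})"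
    using checkpoint_val_le_1[OF wf w] by (intro bdd_aboveI[of _ 1]) auto
qed (use \<psi> ns in blast)

lemma fval_le:
  assumes "\<And>\<psi> ns. \<psi> \<in> qacc A \<Longrightarrow> unit_vec (qdim A) \<psi> \<Longrightarrow> strict_mono ns \<Longrightarrow>
      checkpoint_val X A w \<psi> ns \<le> M"
    and "0 \<le> M"
  shows "fval X A w \<le> M"
  unfolding fval_eq_Sup_checkpoint_val using assms by (intro cSup_least) auto

lemma fval_le_1: "qauto_wf \<Sigma> A \<Longrightarrow> \<forall>k. w k \<in> \<Sigma> \<Longrightarrow> fval X A w \<le> 1"
  by (intro fval_le checkpoint_val_le_1) auto

lemma fval_gtE:
  assumes "m < fval X A w" "0 \<le> m"
  obtains \<psi> ns where "\<psi> \<in> qacc A" "unit_vec (qdim A) \<psi>" "strict_mono ns"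
    "m < checkpoint_val X A w \<psi> ns"
  using fval_le[of A X w m] assms by force

primrec run_from :: "qauto \<Rightarrow> (nat \<Rightarrow> nat) \<Rightarrow> nat \<Rightarrow> nat \<Rightarrow> complex vec \<Rightarrow> complex vec" where
  "run_from A w j 0 v = v"
| "run_from A w j (Suc t) v = qtrans A (w (j + t)) *\<^sub>v run_from A w j t v"

lemma nd_run_add: "nd_run A w (j + t) = run_from A w j t (nd_run A w j)"
  by (induction t) auto

lemma run_from_cong:
  "(\<And>r. r < t \<Longrightarrow> w' (j' + r) = w (j + r)) \<Longrightarrow> run_from A w' j' t v = run_from A w j t v"
  by (induction t) auto

lemma run_from_const:
  "(\<And>r. r < t \<Longrightarrow> w (j + r) = \<sigma>) \<Longrightarrow> run_from A w j t v = mat_iter (qtrans A \<sigma>) t v"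
  by (induction t) (auto simp: mat_iter_Suc)

lemma d_run_after_checkpoint:
  assumes "j \<in> range ns" "\<And>r. j < r \<Longrightarrow> r \<le> j + t \<Longrightarrow> r \<notin> range ns"
  shows "d_run A w \<psi> ns (Suc (j + t)) = run_from A w j (Suc t) \<psi>"
  using assms by (induction t) auto

lemma d_run_first_checkpoint:
  assumes "strict_mono ns"
  shows "d_run A w \<psi> ns (ns 0) = run_from A w 0 (ns 0) (qinit A)"
proof -
  have "d_run A w \<psi> ns r = run_from A w 0 r (qinit A)" if "r \<le> ns 0" for r
    using that
  proof (induction r)
    case (Suc r)
    have "r \<notin> range ns"
    proof
      assume "r \<in> range ns"
      then obtain q where "r = ns q" by auto
      moreover have "ns 0 \<le> ns q"
        using assms by (simp add: strict_mono_less_eq)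
      ultimately show False
        using Suc.prems by simp
    qed
    with Suc show ?case by simp
  qed simp
  then show ?thesis by simp
qed

lemma d_run_next_checkpoint:
  assumes ns: "strict_mono ns"
  shows "d_run A w \<psi> ns (ns (Suc i)) = run_from A w (ns i) (ns (Suc i) - ns i) \<psi>"
proof -
  obtain t where t: "ns (Suc i) = Suc (ns i + t)"
    using ns by (metis less_iff_Suc_add strict_mono_Suc_iff)
  have "r \<notin> range ns" if "ns i < r" "r \<le> ns i + t" for r
  proof
    assume "r \<in> range ns"
    then obtain q where q: "r = ns q" by auto
    then have "i < q"
      using that ns by (simp add: strict_mono_less)
    then have "ns (Suc i) \<le> ns q"
      using ns by (simp add: strict_mono_less_eq)
    with that t q show False
      by simp
  qed
  then show ?thesis
    unfolding t by (subst d_run_after_checkpoint) auto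
qed

section \<open>The angle arccos (3/5)\<close>

definition rot_angle :: real where
  "rot_angle = arccos (3 / 5)"

lemma cos_rot_angle: "cos rot_angle = 3 / 5"
  by (simp add: rot_angle_def)

lemma sin_rot_angle: "sin rot_angle = 4 / 5"
proof -
  have "sin rot_angle = sqrt (1 - (3 / 5)\<^sup>2)"
    by (simp add: rot_angle_def sin_arccos)
  also have "1 - (3 / 5 :: real)\<^sup>2 = (4 / 5)\<^sup>2"
    by (simp add: power2_eq_square)
  finally show ?thesis
    by simp
qed

(* The Gaussian integers (3 + 4i)^j. *)
primrec pyth :: "nat \<Rightarrow> int \<times> int" where
  "pyth 0 = (1, 0)"
| "pyth (Suc j) = (3 * fst (pyth j) - 4 * snd (pyth j), 4 * fst (pyth j) + 3 * snd (pyth j))"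

lemma pyth_cos_sin:
  "cos (real j * rot_angle) = fst (pyth j) / 5 ^ j \<and> sin (real j * rot_angle) = snd (pyth j) / 5 ^ j"
proof (induction j)
  case (Suc j)
  have "real (Suc j) * rot_angle = real j * rot_angle + rot_angle"
    by (simp add: algebra_simps)
  with Suc show ?case
    by (simp add: cos_add sin_add cos_rot_angle sin_rot_angle field_simps)
qed simp

lemma pyth_mod_5: "j \<ge> 1 \<Longrightarrow> fst (pyth j) mod 5 = 3 \<and> snd (pyth j) mod 5 = 4"
proof (induction j)
  case (Suc j)
  show ?case
  proof (cases "j = 0")
    case False
    with Suc have IH: "fst (pyth j) mod 5 = 3" "snd (pyth j) mod 5 = 4"
      by auto
    have "(3 * fst (pyth j) - 4 * snd (pyth j)) mod 5
        = ((3 * (fst (pyth j) mod 5)) mod 5 - (4 * (snd (pyth j) mod 5)) mod 5) mod 5"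
      "(4 * fst (pyth j) + 3 * snd (pyth j)) mod 5
        = ((4 * (fst (pyth j) mod 5)) mod 5 + (3 * (snd (pyth j) mod 5)) mod 5) mod 5"
      by (simp_all add: mod_diff_eq mod_add_eq mod_mult_right_eq)
    with IH show ?thesis
      by simp
  qed simp
qed simp

lemma sin_rot_angle_mult_neq_0: "j \<ge> 1 \<Longrightarrow> sin (real j * rot_angle) \<noteq> 0"
  using pyth_cos_sin[of j] pyth_mod_5[of j] by auto

lemma cos_sq_rot_angle_mult_lt_1:
  assumes "j \<ge> 1"
  shows "(cos (real j * rot_angle))\<^sup>2 < 1"
proof -
  have "(sin (real j * rot_angle))\<^sup>2 > 0"
    using sin_rot_angle_mult_neq_0[OF assms] by simp
  then show ?thesis
    using sin_cos_squared_add[of "real j * rot_angle"] by linarith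
qed

lemma rot_angle_div_pi_irrational:
  assumes "d \<ge> 1"
  shows "real d * rot_angle / pi \<notin> \<rat>"
proof
  assume "real d * rot_angle / pi \<in> \<rat>"
  then obtain p q :: int where "q > 0" "real d * rot_angle / pi = of_int p / of_int q"
    by (elim Rats_cases')
  then have "real (nat q * d) * rot_angle = of_int p * pi"
    by (simp add: field_simps)
  then have "sin (real (nat q * d) * rot_angle) = 0"
    by (simp add: sin_zero_iff_int2)
  moreover have "nat q * d \<ge> 1"
    using \<open>q > 0\<close> assms by simp
  ultimately show False
    using sin_rot_angle_mult_neq_0 by blast
qed

lemma abs_cos_sq_diff_le: "\<bar>(cos a)\<^sup>2 - (cos b)\<^sup>2\<bar> \<le> 2 * \<bar>a - b\<bar>" for a b :: real
proof -
  have "\<bar>cos a - cos b\<bar> = 2 * \<bar>sin ((a + b) / 2)\<bar> * \<bar>sin ((b - a) / 2)\<bar>"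
    by (simp add: cos_diff_cos abs_mult)
  also have "\<dots> \<le> 2 * 1 * \<bar>(b - a) / 2\<bar>"
    by (intro mult_mono abs_sin_le_one abs_sin_x_le_abs_x) auto
  finally have "\<bar>cos a - cos b\<bar> \<le> \<bar>a - b\<bar>"
    by simp
  moreover have "\<bar>cos a + cos b\<bar> \<le> 2"
    using abs_cos_le_one[of a] abs_cos_le_one[of b] by linarith
  ultimately have "\<bar>cos a - cos b\<bar> * \<bar>cos a + cos b\<bar> \<le> \<bar>a - b\<bar> * 2"
    by (intro mult_mono) auto
  moreover have "(cos a)\<^sup>2 - (cos b)\<^sup>2 = (cos a - cos b) * (cos a + cos b)"
    by (simp add: power2_eq_square algebra_simps)
  ultimately show ?thesis
    by (simp add: abs_mult mult.commute)
qed

lemma cos_sq_diff_int_pi: "(cos (x - of_int h * pi))\<^sup>2 = (cos x)\<^sup>2"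
proof -
  have "sin (of_int h * pi) = 0"
    by (simp add: sin_zero_iff_int2)
  then have "(cos (of_int h * pi))\<^sup>2 = 1"
    using sin_cos_squared_add[of "of_int h * pi"] by simp
  with \<open>sin (of_int h * pi) = 0\<close> show ?thesis
    by (simp add: cos_diff power_mult_distrib)
qed

lemma cos_sq_mult_approx:
  assumes "x / pi \<notin> \<rat>" "\<epsilon> > 0"
  obtains k :: nat where "k > 0" "\<bar>(cos (real k * x))\<^sup>2 - (cos y)\<^sup>2\<bar> < \<epsilon>"
proof -
  obtain h k where "k > 0" and hk: "\<bar>of_int k * (x / pi) - of_int h - y / pi\<bar> < \<epsilon> / (2 * pi)"
    using sequence_of_fractional_parts_is_dense[OF assms(1), of "\<epsilon> / (2 * pi)"] assms(2)
    by (metis divide_pos_pos pi_gt_zero zero_less_mult_iff zero_less_numeral)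
  have "of_int k * x - of_int h * pi - y = pi * (of_int k * (x / pi) - of_int h - y / pi)"
    by (simp add: field_simps)
  then have "\<bar>of_int k * x - of_int h * pi - y\<bar> = pi * \<bar>of_int k * (x / pi) - of_int h - y / pi\<bar>"
    by (simp add: abs_mult)
  also have "\<dots> < \<epsilon> / 2"
    using hk pi_gt_zero by (simp add: field_simps)
  finally have close: "\<bar>of_int k * x - of_int h * pi - y\<bar> < \<epsilon> / 2" .
  have "\<bar>(cos (of_int k * x))\<^sup>2 - (cos y)\<^sup>2\<bar> = \<bar>(cos (of_int k * x - of_int h * pi))\<^sup>2 - (cos y)\<^sup>2\<bar>"
    by (simp only: cos_sq_diff_int_pi)
  also have "\<dots> \<le> 2 * \<bar>of_int k * x - of_int h * pi - y\<bar>"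
    by (rule abs_cos_sq_diff_le)
  also have "\<dots> < \<epsilon>"
    using close by (simp add: field_simps)
  finally show ?thesis
    using \<open>k > 0\<close> by (intro that[of "nat k"]) auto
qed

lemma cos_sq_rot_angle_near_1:
  assumes "\<epsilon> > 0"
  obtains d where "d \<ge> 1" "1 - \<epsilon> < (cos (real d * rot_angle))\<^sup>2"
proof -
  obtain k where "k > 0" "\<bar>(cos (real k * (real 1 * rot_angle)))\<^sup>2 - (cos 0)\<^sup>2\<bar> < \<epsilon>"
    using cos_sq_mult_approx[OF rot_angle_div_pi_irrational assms] by blast
  then show ?thesis
    by (intro that[of k]) auto
qed

lemma cos_sq_rot_angle_small:
  assumes "d \<ge> 1" "l > 0"
  obtains t where "(cos (real (t * d) * rot_angle))\<^sup>2 < l"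
proof -
  obtain k where "\<bar>(cos (real k * (real d * rot_angle)))\<^sup>2 - (cos (pi / 2))\<^sup>2\<bar> < l"
    using cos_sq_mult_approx[OF rot_angle_div_pi_irrational[OF assms(1)] assms(2)] by blast
  then show ?thesis
    by (intro that[of k]) (simp add: mult.assoc)
qed

section \<open>The rotation automaton\<close>

definition rot_vec :: "real \<Rightarrow> complex vec" where
  "rot_vec \<phi> = vec 2 (\<lambda>i. if i = 0 then complex_of_real (cos \<phi>) else complex_of_real (sin \<phi>))"

definition rot_mat :: "complex mat" where
  "rot_mat = mat 2 2 (\<lambda>(i, j). if i = 0 then (if j = 0 then 3/5 else - 4/5) else (if j = 0 then 4/5 else 3/5))"

definition rot_auto :: qauto where
  "rot_auto = \<lparr>qdim = 2, qinit = rot_vec 0, qtrans = (\<lambda>\<sigma>. if \<sigma> = 1 then rot_mat else 1\<^sub>m 2),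
     qacc = {v \<in> carrier_vec 2. v $ 1 = 0}\<rparr>"

lemma rot_vec_carrier [simp]: "rot_vec \<phi> \<in> carrier_vec 2"
  by (simp add: rot_vec_def)

lemma rot_mat_carrier [simp]: "rot_mat \<in> carrier_mat 2 2"
  by (simp add: rot_mat_def)

lemma sum_2: "(\<Sum>i\<in>{0..<2::nat}. f i) = f 0 + f 1"
  by (simp add: numeral_2_eq_2)

lemma rot_mat_mult_rot_vec: "rot_mat *\<^sub>v (c \<cdot>\<^sub>v rot_vec \<phi>) = c \<cdot>\<^sub>v rot_vec (\<phi> + rot_angle)"
proof -
  have "rot_mat *\<^sub>v rot_vec \<phi> = rot_vec (\<phi> + rot_angle)"
  proof (rule eq_vecI)
    fix i assume "i < dim_vec (rot_vec (\<phi> + rot_angle))"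
    then have "i = 0 \<or> i = 1"
      by (auto simp: rot_vec_def)
    then show "(rot_mat *\<^sub>v rot_vec \<phi>) $ i = rot_vec (\<phi> + rot_angle) $ i"
      by (auto simp: rot_mat_def rot_vec_def scalar_prod_def sum_2 cos_add sin_add
          cos_rot_angle sin_rot_angle algebra_simps)
  qed (simp add: rot_mat_def rot_vec_def)
  then show ?thesis
    by (simp add: mult_mat_vec[OF rot_mat_carrier rot_vec_carrier])
qed

lemma unitary_rot_mat: "unitary_mat 2 rot_mat"
proof -
  have adj: "adj rot_mat
      = mat 2 2 (\<lambda>(i, j). if i = 0 then (if j = 0 then 3/5 else 4/5) else (if j = 0 then - 4/5 else 3/5))"
    by (rule eq_matI) (auto simp: adj_def rot_mat_def)
  have "rot_mat * adj rot_mat = 1\<^sub>m 2" "adj rot_mat * rot_mat = 1\<^sub>m 2"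
    unfolding adj by (rule eq_matI; auto simp: rot_mat_def scalar_prod_def sum_2 less_2_cases_iff)+
  then show ?thesis
    by (simp add: unitary_mat_def)
qed

lemma unitary_one: "unitary_mat n (1\<^sub>m n)"
proof -
  have "adj (1\<^sub>m n) = (1\<^sub>m n :: complex mat)"
    by (rule eq_matI) (auto simp: adj_def)
  then show ?thesis
    by (simp add: unitary_mat_def)
qed

lemma wf_rot_auto: "qauto_wf {0, 1} rot_auto"
  unfolding qauto_wf_def
proof (intro conjI)
  show "unit_vec (qdim rot_auto) (qinit rot_auto)"
    by (simp add: rot_auto_def unit_vec_def braket_sum rot_vec_def sum_2 lessThan_atLeast0)
  show "\<forall>\<sigma>\<in>{0, 1}. unitary_mat (qdim rot_auto) (qtrans rot_auto \<sigma>)"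
    by (auto simp: rot_auto_def unitary_rot_mat unitary_one)
  show "is_subspace (qdim rot_auto) (qacc rot_auto)"
    by (auto simp: rot_auto_def is_subspace_def)
qed

definition count_ones :: "(nat \<Rightarrow> nat) \<Rightarrow> nat \<Rightarrow> nat \<Rightarrow> nat" where
  "count_ones w j t = card {r. r < t \<and> w (j + r) = 1}"

lemma count_ones_0 [simp]: "count_ones w j 0 = 0"
  by (simp add: count_ones_def)

lemma count_ones_Suc: "count_ones w j (Suc t) = count_ones w j t + (if w (j + t) = 1 then 1 else 0)"
proof -
  have "{r. r < Suc t \<and> w (j + r) = 1}
      = {r. r < t \<and> w (j + r) = 1} \<union> (if w (j + t) = 1 then {t} else {})"
    by (auto simp: less_Suc_eq)
  then show ?thesis
    by (simp add: count_ones_def)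
qed

lemma run_from_rot_auto:
  "run_from rot_auto w j t (c \<cdot>\<^sub>v rot_vec \<phi>) = c \<cdot>\<^sub>v rot_vec (\<phi> + real (count_ones w j t) * rot_angle)"
proof (induction t)
  case (Suc t)
  have "c \<cdot>\<^sub>v rot_vec (\<phi> + real (count_ones w j t) * rot_angle) \<in> carrier_vec 2"
    by simp
  with Suc show ?case
    by (simp add: rot_auto_def count_ones_Suc rot_mat_mult_rot_vec algebra_simps)
qed simp

lemma nd_run_rot_auto: "nd_run rot_auto w k = rot_vec (real (count_ones w 0 k) * rot_angle)"
  using nd_run_add[of rot_auto w 0 k] run_from_rot_auto[of w 0 k 1 0]
  by (simp add: rot_auto_def)

lemma qacc_rot_auto:
  assumes "\<psi> \<in> qacc rot_auto" "unit_vec (qdim rot_auto) \<psi>"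
  shows "\<psi> = (\<psi> $ 0) \<cdot>\<^sub>v rot_vec 0" "cmod (\<psi> $ 0) = 1"
proof -
  have \<psi>: "\<psi> \<in> carrier_vec 2" "\<psi> $ 1 = 0"
    using assms by (auto simp: rot_auto_def)
  show "\<psi> = (\<psi> $ 0) \<cdot>\<^sub>v rot_vec 0"
  proof (rule eq_vecI)
    fix i assume "i < dim_vec ((\<psi> $ 0) \<cdot>\<^sub>v rot_vec 0)"
    then have "i = 0 \<or> i = 1"
      by (auto simp: rot_vec_def)
    then show "\<psi> $ i = ((\<psi> $ 0) \<cdot>\<^sub>v rot_vec 0) $ i"
      using \<psi> by (auto simp: rot_vec_def)
  qed (use \<psi> in \<open>simp add: rot_vec_def\<close>)
  have "braket \<psi> \<psi> = 1"
    using assms by (simp add: unit_vec_def)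
  then have "cnj (\<psi> $ 0) * \<psi> $ 0 = 1"
    using \<psi> by (simp add: braket_sum sum_2 lessThan_atLeast0)
  then have "(cmod (\<psi> $ 0))\<^sup>2 = 1"
    by (metis complex_norm_square mult.commute of_real_eq_1_iff)
  then show "cmod (\<psi> $ 0) = 1"
    using norm_ge_zero[of "\<psi> $ 0"] by (auto simp: power2_eq_1_iff)
qed

lemma sq_cmod_braket_rot_auto:
  assumes "\<psi> \<in> qacc rot_auto" "unit_vec (qdim rot_auto) \<psi>"
  shows "(cmod (braket \<psi> (c \<cdot>\<^sub>v rot_vec \<phi>)))\<^sup>2 = (cmod c)\<^sup>2 * (cos \<phi>)\<^sup>2"
proof -
  have "braket \<psi> (c \<cdot>\<^sub>v rot_vec \<phi>) = cnj (\<psi> $ 0) * c * complex_of_real (cos \<phi>)"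
    by (subst qacc_rot_auto(1)[OF assms]) (simp add: braket_sum rot_vec_def sum_2 lessThan_atLeast0)
  then show ?thesis
    using qacc_rot_auto(2)[OF assms] by (simp add: norm_mult power_mult_distrib)
qed

lemma sq_cmod_braket_rot_vec:
  assumes "\<psi> \<in> qacc rot_auto" "unit_vec (qdim rot_auto) \<psi>"
  shows "(cmod (braket \<psi> (rot_vec \<phi>)))\<^sup>2 = (cos \<phi>)\<^sup>2"
  using sq_cmod_braket_rot_auto[OF assms, of 1 \<phi>] by simp

lemma rot_vec_0_acc: "rot_vec 0 \<in> qacc rot_auto" "unit_vec (qdim rot_auto) (rot_vec 0)"
  using wf_rot_auto by (auto simp: rot_auto_def rot_vec_def qauto_wf_def)

definition ones_block :: "nat \<Rightarrow> nat \<Rightarrow> nat \<Rightarrow> nat" where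
  "ones_block k j i = (if k \<le> i \<and> i < k + j then 1 else 0)"

lemma ones_block_binary: "\<forall>i. ones_block k j i \<in> {0, 1}"
  by (simp add: ones_block_def)

lemma count_ones_ones_block: "k + j \<le> t \<Longrightarrow> count_ones (ones_block k j) 0 t = j"
proof -
  assume "k + j \<le> t"
  then have "{r. r < t \<and> ones_block k j (0 + r) = 1} = {k..<k + j}"
    by (auto simp: ones_block_def)
  then show ?thesis
    by (simp add: count_ones_def)
qed

lemma count_ones_prefix: "count_ones (ones_block 0 n) a t = min t (n - a)"
proof -
  have "{r. r < t \<and> ones_block 0 n (a + r) = 1} = {..<min t (n - a)}"
    by (auto simp: ones_block_def)
  then show ?thesis
    by (simp add: count_ones_def)
qed

lemma fval_ND_rot_auto_zeros: "fval ND rot_auto (\<lambda>_. 0) = 1"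
proof (rule antisym)
  show "fval ND rot_auto (\<lambda>_. 0) \<le> 1"
    by (rule fval_le_1[OF wf_rot_auto]) simp
  have "count_ones (\<lambda>_. 0) 0 k = 0" for k
    by (simp add: count_ones_def)
  then have "checkpoint_val ND rot_auto (\<lambda>_. 0) (rot_vec 0) id = 1"
    unfolding checkpoint_val_def
    by (simp add: run_def nd_run_rot_auto sq_cmod_braket_rot_vec[OF rot_vec_0_acc])
  then show "1 \<le> fval ND rot_auto (\<lambda>_. 0)"
    using fval_ge_checkpoint_val[OF wf_rot_auto _ rot_vec_0_acc, of "\<lambda>_. 0" id ND]
    by (simp add: strict_mono_def)
qed

lemma fval_ND_rot_auto_ones_block_le: "fval ND rot_auto (ones_block k j) \<le> (cos (real j * rot_angle))\<^sup>2"
proof (rule fval_le)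
  fix \<psi> and ns :: "nat \<Rightarrow> nat"
  assume \<psi>: "\<psi> \<in> qacc rot_auto" "unit_vec (qdim rot_auto) \<psi>" and ns: "strict_mono ns"
  have "k + j \<le> ns (k + j)"
    using ns by (rule strict_mono_imp_increasing)
  then show "checkpoint_val ND rot_auto (ones_block k j) \<psi> ns \<le> (cos (real j * rot_angle))\<^sup>2"
    using checkpoint_val_le[of ND rot_auto "ones_block k j" \<psi> ns "k + j"]
    by (simp add: run_def nd_run_rot_auto count_ones_ones_block sq_cmod_braket_rot_vec[OF \<psi>])
qed simp

lemma fval_D_rot_auto_ones: "fval D rot_auto (\<lambda>_. 1) = 1"
proof (rule antisym)
  show "fval D rot_auto (\<lambda>_. 1) \<le> 1"
    by (rule fval_le_1[OF wf_rot_auto]) simp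
  show "1 \<le> fval D rot_auto (\<lambda>_. 1)"
  proof (rule field_le_epsilon)
    fix \<epsilon> :: real assume "0 < \<epsilon>"
    then obtain d where d: "d \<ge> 1" "1 - \<epsilon> < (cos (real d * rot_angle))\<^sup>2"
      by (rule cos_sq_rot_angle_near_1)
    define ns where "ns i = i * d" for i
    have ns: "strict_mono ns"
      unfolding ns_def strict_mono_Suc_iff using d(1) by simp
    have "1 - \<epsilon> \<le> (cmod (braket (rot_vec 0) (run D rot_auto (\<lambda>_. 1) (rot_vec 0) ns (ns i))))\<^sup>2" for i
    proof (cases i)
      case 0
      then show ?thesis
        using \<open>0 < \<epsilon>\<close> sq_cmod_braket_rot_vec[OF rot_vec_0_acc, of 0]
        by (simp add: run_def ns_def rot_auto_def)
    next
      case (Suc i')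
      have "count_ones (\<lambda>_. 1) (ns i') d = d"
        by (simp add: count_ones_def)
      then have "run D rot_auto (\<lambda>_. 1) (rot_vec 0) ns (ns i) = rot_vec (real d * rot_angle)"
        using d_run_next_checkpoint[OF ns] run_from_rot_auto[of "\<lambda>_. 1" "ns i'" d 1 0]
        by (simp add: run_def Suc ns_def)
      then show ?thesis
        using d(2) sq_cmod_braket_rot_vec[OF rot_vec_0_acc] by simp
    qed
    then have "1 - \<epsilon> \<le> checkpoint_val D rot_auto (\<lambda>_. 1) (rot_vec 0) ns"
      by (rule checkpoint_val_ge)
    also have "\<dots> \<le> fval D rot_auto (\<lambda>_. 1)"
      by (rule fval_ge_checkpoint_val[OF wf_rot_auto _ rot_vec_0_acc ns]) simp
    finally show "1 \<le> fval D rot_auto (\<lambda>_. 1) + \<epsilon>"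
      by simp
  qed
qed

lemma d_run_rot_auto_prefix:
  assumes \<psi>: "\<psi> \<in> qacc rot_auto" "unit_vec (qdim rot_auto) \<psi>" and ns: "strict_mono ns" and "n \<ge> 1"
  obtains i j where "1 \<le> j" "j \<le> n"
    "(cmod (braket \<psi> (d_run rot_auto (ones_block 0 n) \<psi> ns (ns i))))\<^sup>2 = (cos (real j * rot_angle))\<^sup>2"
proof -
  define i0 where "i0 = (LEAST i. n \<le> ns i)"
  have "n \<le> ns n"
    using ns by (rule strict_mono_imp_increasing)
  then have i0: "n \<le> ns i0"
    unfolding i0_def by (rule LeastI)
  show thesis
  proof (cases i0)
    case 0
    have "d_run rot_auto (ones_block 0 n) \<psi> ns (ns 0) = rot_vec (real n * rot_angle)"
      using d_run_first_checkpoint[OF ns] run_from_rot_auto[of "ones_block 0 n" 0 "ns 0" 1 0] i0 0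
      by (simp add: rot_auto_def count_ones_prefix)
    then show thesis
      using that[of n i0] \<open>n \<ge> 1\<close> 0 sq_cmod_braket_rot_vec[OF \<psi>] by simp
  next
    case (Suc i)
    have before: "ns i < n"
      using not_less_Least[of i "\<lambda>i. n \<le> ns i"] Suc by (simp add: i0_def)
    have "min (ns (Suc i) - ns i) (n - ns i) = n - ns i"
      using i0 Suc by simp
    then have "d_run rot_auto (ones_block 0 n) \<psi> ns (ns i0) = (\<psi> $ 0) \<cdot>\<^sub>v rot_vec (real (n - ns i) * rot_angle)"
      using d_run_next_checkpoint[OF ns, of rot_auto "ones_block 0 n" \<psi> i]
        run_from_rot_auto[of "ones_block 0 n" "ns i" "ns (Suc i) - ns i" "\<psi> $ 0" 0] qacc_rot_auto(1)[OF \<psi>]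
      by (simp add: Suc count_ones_prefix)
    then show thesis
      using that[of "n - ns i" i0] before sq_cmod_braket_rot_auto[OF \<psi>] qacc_rot_auto(2)[OF \<psi>] by simp
  qed
qed

lemma fval_D_rot_auto_prefix_lt_1:
  assumes "n \<ge> 1"
  shows "fval D rot_auto (ones_block 0 n) < 1"
proof -
  define M where "M = Max ((\<lambda>j. (cos (real j * rot_angle))\<^sup>2) ` {1..n})"
  have M_ge: "(cos (real j * rot_angle))\<^sup>2 \<le> M" if "j \<in> {1..n}" for j
    unfolding M_def using that by (intro Max_ge) auto
  have "M < 1"
    unfolding M_def using assms cos_sq_rot_angle_mult_lt_1 by (subst Max_less_iff) auto
  have "fval D rot_auto (ones_block 0 n) \<le> M"
  proof (rule fval_le)
    fix \<psi> and ns :: "nat \<Rightarrow> nat"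
    assume \<psi>: "\<psi> \<in> qacc rot_auto" "unit_vec (qdim rot_auto) \<psi>" and ns: "strict_mono ns"
    obtain i j where "1 \<le> j" "j \<le> n"
      "(cmod (braket \<psi> (d_run rot_auto (ones_block 0 n) \<psi> ns (ns i))))\<^sup>2 = (cos (real j * rot_angle))\<^sup>2"
      using d_run_rot_auto_prefix[OF \<psi> ns assms] .
    then show "checkpoint_val D rot_auto (ones_block 0 n) \<psi> ns \<le> M"
      using checkpoint_val_le[of D rot_auto "ones_block 0 n" \<psi> ns i] M_ge[of j] by (simp add: run_def)
  next
    show "0 \<le> M"
      using M_ge[of n] assms by (meson atLeastAtMost_iff le_refl order_trans zero_le_power2)
  qed
  with \<open>M < 1\<close> show ?thesis
    by simp
qed

section \<open>Pumping arguments for arbitrary automata\<close>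

lemma recurrent_overlap:
  assumes U: "unitary_mat n U" and \<psi>: "unit_vec n \<psi>" and x: "x \<in> carrier_vec n"
    and l: "0 \<le> l" "l < (cmod (braket \<psi> x))\<^sup>2"
  obtains l' where "l < l'" "infinite {k. 0 < k \<and> l' \<le> (cmod (braket \<psi> (mat_iter U k x)))\<^sup>2}"
proof -
  define r where "r = sqrt l"
  have r: "0 \<le> r" "r < cmod (braket \<psi> x)"
    using l by (simp_all add: r_def real_less_lsqrt)
  define \<epsilon> where "\<epsilon> = (cmod (braket \<psi> x) - r) / 2"
  have "\<epsilon> > 0" and mid: "r + \<epsilon> = cmod (braket \<psi> x) - \<epsilon>"
    using r by (simp_all add: \<epsilon>_def field_simps)
  have "(r + \<epsilon>)\<^sup>2 \<le> (cmod (braket \<psi> (mat_iter U k x)))\<^sup>2"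
    if "vec_norm (mat_iter U k x - x) < \<epsilon>" for k
  proof -
    have "r + \<epsilon> \<le> cmod (braket \<psi> (mat_iter U k x))"
      using cmod_braket_diff_le[OF \<psi> x mat_iter_carrier[OF U x], of k] that mid by linarith
    then show ?thesis
      using r(1) \<open>\<epsilon> > 0\<close> by (intro power_mono) auto
  qed
  then have "{k. 0 < k \<and> vec_norm (mat_iter U k x - x) < \<epsilon>}
      \<subseteq> {k. 0 < k \<and> (r + \<epsilon>)\<^sup>2 \<le> (cmod (braket \<psi> (mat_iter U k x)))\<^sup>2}"
    by auto
  moreover have "infinite {k. 0 < k \<and> vec_norm (mat_iter U k x - x) < \<epsilon>}"
    using unitary_recurrence[OF U x \<open>\<epsilon> > 0\<close>] .
  moreover have "l < (r + \<epsilon>)\<^sup>2"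
    using r(1) \<open>\<epsilon> > 0\<close> power_strict_mono[of r "r + \<epsilon>" 2] l(1) by (simp add: r_def)
  ultimately show thesis
    by (intro that[of "(r + \<epsilon>)\<^sup>2"]) (auto dest: infinite_super)
qed

definition insert_checkpoints :: "(nat \<Rightarrow> nat) \<Rightarrow> nat \<Rightarrow> nat \<Rightarrow> nat \<Rightarrow> nat" where
  "insert_checkpoints ns d t i = (if i \<le> t then ns 0 + i * d else ns (i - t) + t * d)"

lemma strict_mono_insert_checkpoints:
  assumes ns: "strict_mono ns" and "d \<ge> 1"
  shows "strict_mono (insert_checkpoints ns d t)"
  unfolding strict_mono_Suc_iff
proof
  fix i
  consider "Suc i \<le> t" | "i = t" | "t < i"
    by linarith
  then show "insert_checkpoints ns d t i < insert_checkpoints ns d t (Suc i)"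
  proof cases
    case 2
    have "ns 0 < ns 1"
      using ns by (simp add: strict_mono_def)
    with 2 show ?thesis
      by (simp add: insert_checkpoints_def)
  next
    case 3
    then have "ns (i - t) < ns (Suc i - t)"
      using ns by (simp add: strict_mono_def)
    with 3 show ?thesis
      by (simp add: insert_checkpoints_def)
  qed (use \<open>d \<ge> 1\<close> in \<open>simp add: insert_checkpoints_def\<close>)
qed

(* For i = 0 the right-hand side is the first old checkpoint, as 0 - t = 0. *)
lemma d_run_insert_checkpoints:
  fixes t :: nat
  assumes ns: "strict_mono ns" and "d \<ge> 1"
  defines "ns' \<equiv> insert_checkpoints ns d t"
  shows "d_run B (ones_block (ns 0) (t * d)) \<psi> ns' (ns' i)
    = (if 0 < i \<and> i \<le> t then mat_iter (qtrans B 1) d \<psi> else d_run B (\<lambda>_. 0) \<psi> ns (ns (i - t)))"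
proof -
  let ?w = "ones_block (ns 0) (t * d)"
  have ns': "strict_mono ns'"
    unfolding ns'_def using ns \<open>d \<ge> 1\<close> by (rule strict_mono_insert_checkpoints)
  have "ns 0 \<le> ns j" for j
    using ns by (simp add: strict_mono_less_eq)
  consider "i = 0" | i' where "i = Suc i'" "Suc i' \<le> t" | i' where "i = Suc i'" "t \<le> i'"
    by (metis nat.exhaust not_less_eq_eq)
  then show ?thesis
  proof cases
    case 1
    have "d_run B ?w \<psi> ns' (ns' 0) = run_from B ?w 0 (ns 0) (qinit B)"
      using d_run_first_checkpoint[OF ns'] by (simp add: ns'_def insert_checkpoints_def)
    also have "\<dots> = run_from B (\<lambda>_. 0) 0 (ns 0) (qinit B)"
      by (rule run_from_cong) (simp add: ones_block_def)
    finally show ?thesis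
      using 1 d_run_first_checkpoint[OF ns] by simp
  next
    case (2 i')
    have "ns' i' = ns 0 + i' * d" "ns' (Suc i') - ns' i' = d"
      using 2 by (simp_all add: ns'_def insert_checkpoints_def)
    moreover have "i' * d + r < t * d" if "r < d" for r
      using that mult_le_mono1[OF \<open>Suc i' \<le> t\<close>, of d] by simp
    then have "run_from B ?w (ns 0 + i' * d) d \<psi> = mat_iter (qtrans B 1) d \<psi>"
      by (intro run_from_const) (simp add: ones_block_def)
    ultimately show ?thesis
      using 2 d_run_next_checkpoint[OF ns', of B ?w \<psi> i'] by simp
  next
    case (3 i')
    define j where "j = i' - t"
    have "ns' i' = ns j + t * d" "ns' (Suc i') = ns (Suc j) + t * d"
      using 3 by (auto simp: ns'_def insert_checkpoints_def j_def Suc_diff_le)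
    then have "d_run B ?w \<psi> ns' (ns' (Suc i')) = run_from B ?w (ns j + t * d) (ns (Suc j) - ns j) \<psi>"
      using d_run_next_checkpoint[OF ns', of B ?w \<psi> i'] by simp
    also have "\<dots> = run_from B (\<lambda>_. 0) (ns j) (ns (Suc j) - ns j) \<psi>"
      using \<open>ns 0 \<le> ns j\<close> by (intro run_from_cong) (simp add: ones_block_def)
    also have "\<dots> = d_run B (\<lambda>_. 0) \<psi> ns (ns (Suc j))"
      using d_run_next_checkpoint[OF ns] by simp
    finally show ?thesis
      using 3 by (simp add: j_def Suc_diff_le)
  qed
qed

lemma fval_D_pump:
  assumes wf: "qauto_wf {0, 1} B" and m: "0 \<le> m" "m < 1" and val: "m < fval D B (\<lambda>_. 0)"
  obtains k d where "d \<ge> 1" "\<And>t. m < fval D B (ones_block k (t * d))"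
proof -
  obtain \<psi> ns where \<psi>: "\<psi> \<in> qacc B" "unit_vec (qdim B) \<psi>" and ns: "strict_mono ns"
    and val_\<psi>: "m < checkpoint_val D B (\<lambda>_. 0) \<psi> ns"
    using fval_gtE[OF val m(1)] .
  let ?U = "qtrans B 1"
  have U: "unitary_mat (qdim B) ?U"
    using wf_unitary[OF wf] by simp
  have "\<psi> \<in> carrier_vec (qdim B)" "m < (cmod (braket \<psi> \<psi>))\<^sup>2"
    using \<psi>(2) m by (simp_all add: unit_vec_def)
  then obtain m' where "m < m'"
    and returns: "infinite {k. 0 < k \<and> m' \<le> (cmod (braket \<psi> (mat_iter ?U k \<psi>)))\<^sup>2}"
    using recurrent_overlap[OF U \<psi>(2) _ m(1)] by blast
  obtain d where "0 < d" "m' \<le> (cmod (braket \<psi> (mat_iter ?U d \<psi>)))\<^sup>2"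
    using not_finite_existsD[OF returns] by blast
  with \<open>m < m'\<close> have d: "0 < d" "m < (cmod (braket \<psi> (mat_iter ?U d \<psi>)))\<^sup>2"
    by auto
  have "m < fval D B (ones_block (ns 0) (t * d))" for t
  proof -
    let ?ns' = "insert_checkpoints ns d t"
    have "min (checkpoint_val D B (\<lambda>_. 0) \<psi> ns) ((cmod (braket \<psi> (mat_iter ?U d \<psi>)))\<^sup>2)
        \<le> checkpoint_val D B (ones_block (ns 0) (t * d)) \<psi> ?ns'"
    proof (rule checkpoint_val_ge)
      fix i
      show "min (checkpoint_val D B (\<lambda>_. 0) \<psi> ns) ((cmod (braket \<psi> (mat_iter ?U d \<psi>)))\<^sup>2)
          \<le> (cmod (braket \<psi> (run D B (ones_block (ns 0) (t * d)) \<psi> ?ns' (?ns' i))))\<^sup>2"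
        using d_run_insert_checkpoints[OF ns, where d = d and t = t and B = B and \<psi> = \<psi> and i = i] d(1)
          checkpoint_val_le[of D B "\<lambda>_. 0" \<psi> ns "i - t"]
        by (auto simp: run_def)
    qed
    also have "\<dots> \<le> fval D B (ones_block (ns 0) (t * d))"
      using d(1) by (intro fval_ge_checkpoint_val[OF wf ones_block_binary \<psi>]
          strict_mono_insert_checkpoints[OF ns]) simp
    finally show ?thesis
      using val_\<psi> d(2) by linarith
  qed
  with d(1) show thesis
    by (intro that[of d "ns 0"]) auto
qed

lemma nd_run_ones_block_prefix:
  "nd_run B (ones_block 0 n) (n + k) = mat_iter (qtrans B 0) k (nd_run B (\<lambda>_. 1) n)"
proof -
  have "nd_run B (ones_block 0 n) n = nd_run B (\<lambda>_. 1) n"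
    using nd_run_add[of B "ones_block 0 n" 0 n] nd_run_add[of B "\<lambda>_. 1" 0 n]
      run_from_cong[of n "ones_block 0 n" 0 "\<lambda>_. 1" 0 B] by (simp add: ones_block_def)
  moreover have "run_from B (ones_block 0 n) n k v = mat_iter (qtrans B 0) k v" for v
    by (rule run_from_const) (simp add: ones_block_def)
  ultimately show ?thesis
    by (simp add: nd_run_add)
qed

lemma fval_ND_pump:
  assumes wf: "qauto_wf {0, 1} B" and l: "0 \<le> l" and val: "l < fval ND B (\<lambda>_. 1)"
  obtains n where "n \<ge> 1" "l < fval ND B (ones_block 0 n)"
proof -
  obtain \<psi> ns where \<psi>: "\<psi> \<in> qacc B" "unit_vec (qdim B) \<psi>" and ns: "strict_mono ns"
    and val_\<psi>: "l < checkpoint_val ND B (\<lambda>_. 1) \<psi> ns"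
    using fval_gtE[OF val l] .
  define n where "n = ns 1"
  have "ns 0 < ns 1"
    using ns by (simp add: strict_mono_def)
  then have "n \<ge> 1"
    by (simp add: n_def)
  define x where "x = nd_run B (\<lambda>_. 1) n"
  have x: "x \<in> carrier_vec (qdim B)"
    using run_unit_vec[OF wf _ \<psi>(2), of "\<lambda>_. 1" ND] by (simp add: x_def run_def unit_vec_def)
  let ?U = "qtrans B 0"
  have U: "unitary_mat (qdim B) ?U"
    using wf_unitary[OF wf] by simp
  have "l < (cmod (braket \<psi> x))\<^sup>2"
    using val_\<psi> checkpoint_val_le[of ND B "\<lambda>_. 1" \<psi> ns 1] by (simp add: run_def x_def n_def)
  then obtain l' where "l < l'"
    and K: "infinite {k. 0 < k \<and> l' \<le> (cmod (braket \<psi> (mat_iter ?U k x)))\<^sup>2}"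
    using recurrent_overlap[OF U \<psi>(2) x l] by blast
  define ns' where "ns' i = n + enumerate {k. 0 < k \<and> l' \<le> (cmod (braket \<psi> (mat_iter ?U k x)))\<^sup>2} i"
    for i
  have ns': "strict_mono ns'"
    using strict_mono_enumerate[OF K] by (simp add: ns'_def strict_mono_def)
  have "l' \<le> (cmod (braket \<psi> (run ND B (ones_block 0 n) \<psi> ns' (ns' i))))\<^sup>2" for i
    using enumerate_in_set[OF K, of i] by (simp add: run_def ns'_def nd_run_ones_block_prefix x_def)
  then have "l' \<le> checkpoint_val ND B (ones_block 0 n) \<psi> ns'"
    by (rule checkpoint_val_ge)
  also have "\<dots> \<le> fval ND B (ones_block 0 n)"
    by (rule fval_ge_checkpoint_val[OF wf ones_block_binary \<psi> ns'])
  finally show thesis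
    using \<open>n \<ge> 1\<close> \<open>l < l'\<close> by (intro that) auto
qed

lemma QBA_gt_ND_not_subset_QBA_gt_D:
  assumes l: "0 < l" "l < 1" and m: "0 \<le> m" "m < 1"
  shows "\<not> QBA_gt ND {0, 1} l \<subseteq> QBA_gt D {0, 1} m"
proof
  assume "QBA_gt ND {0, 1} l \<subseteq> QBA_gt D {0, 1} m"
  then obtain B where B: "qauto_wf {0, 1} B" and eq: "lang_gt ND {0, 1} rot_auto l = lang_gt D {0, 1} B m"
    using wf_rot_auto unfolding QBA_gt_def by blast
  have "(\<lambda>_. 0) \<in> lang_gt ND {0, 1} rot_auto l"
    using fval_ND_rot_auto_zeros l by (simp add: lang_gt_def)
  then have "(\<lambda>_. 0) \<in> lang_gt D {0, 1} B m"
    using eq by simp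
  then have "m < fval D B (\<lambda>_. 0)"
    by (simp add: lang_gt_def)
  then obtain k d where "d \<ge> 1" and pumped: "\<And>t. m < fval D B (ones_block k (t * d))"
    using fval_D_pump[OF B m] by blast
  obtain t where "(cos (real (t * d) * rot_angle))\<^sup>2 < l"
    using cos_sq_rot_angle_small[OF \<open>d \<ge> 1\<close> l(1)] .
  then have "ones_block k (t * d) \<notin> lang_gt ND {0, 1} rot_auto l"
    using fval_ND_rot_auto_ones_block_le[of k "t * d"] by (simp add: lang_gt_def)
  moreover have "ones_block k (t * d) \<in> lang_gt D {0, 1} B m"
    using pumped ones_block_binary by (simp add: lang_gt_def)
  ultimately show False
    using eq by simp
qed

lemma QBA_eq1_ND_not_subset_QBA_gt_D:
  assumes l: "0 \<le> l" "l < 1"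
  shows "\<not> QBA_eq1 ND {0, 1} \<subseteq> QBA_gt D {0, 1} l"
proof
  assume "QBA_eq1 ND {0, 1} \<subseteq> QBA_gt D {0, 1} l"
  then obtain B where B: "qauto_wf {0, 1} B" and eq: "lang_eq1 ND {0, 1} rot_auto = lang_gt D {0, 1} B l"
    using wf_rot_auto unfolding QBA_eq1_def QBA_gt_def by blast
  have "(\<lambda>_. 0) \<in> lang_eq1 ND {0, 1} rot_auto"
    using fval_ND_rot_auto_zeros by (simp add: lang_eq1_def)
  then have "l < fval D B (\<lambda>_. 0)"
    using eq by (simp add: lang_gt_def)
  then obtain k d where "d \<ge> 1" and pumped: "\<And>t. l < fval D B (ones_block k (t * d))"
    using fval_D_pump[OF B l] by blast
  have "fval ND rot_auto (ones_block k d) < 1"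
    using fval_ND_rot_auto_ones_block_le[of k d] cos_sq_rot_angle_mult_lt_1[OF \<open>d \<ge> 1\<close>] by linarith
  then have "ones_block k d \<notin> lang_eq1 ND {0, 1} rot_auto"
    by (simp add: lang_eq1_def)
  moreover have "ones_block k d \<in> lang_gt D {0, 1} B l"
    using pumped[of 1] ones_block_binary by (simp add: lang_gt_def)
  ultimately show False
    using eq by simp
qed

lemma QBA_eq1_D_not_subset_QBA_gt_ND:
  assumes l: "0 \<le> l" "l < 1"
  shows "\<not> QBA_eq1 D {0, 1} \<subseteq> QBA_gt ND {0, 1} l"
proof
  assume "QBA_eq1 D {0, 1} \<subseteq> QBA_gt ND {0, 1} l"
  then obtain B where B: "qauto_wf {0, 1} B" and eq: "lang_eq1 D {0, 1} rot_auto = lang_gt ND {0, 1} B l"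
    using wf_rot_auto unfolding QBA_eq1_def QBA_gt_def by blast
  have "(\<lambda>_. 1) \<in> lang_eq1 D {0, 1} rot_auto"
    using fval_D_rot_auto_ones by (simp add: lang_eq1_def)
  then have "l < fval ND B (\<lambda>_. 1)"
    using eq by (simp add: lang_gt_def)
  then obtain n where "n \<ge> 1" and pumped: "l < fval ND B (ones_block 0 n)"
    using fval_ND_pump[OF B l(1)] by blast
  have "ones_block 0 n \<notin> lang_eq1 D {0, 1} rot_auto"
    using fval_D_rot_auto_prefix_lt_1[OF \<open>n \<ge> 1\<close>] by (simp add: lang_eq1_def)
  moreover have "ones_block 0 n \<in> lang_gt ND {0, 1} B l"
    using pumped ones_block_binary by (simp add: lang_gt_def)
  ultimately show False
    using eq by simp
qed

theorem theorem7:
  shows "(\<forall>l m::real. 0 < l \<and> l < 1 \<and> 0 \<le> m \<and> m < 1 \<longrightarrow>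
            (\<exists>\<Sigma>. finite \<Sigma> \<and> \<Sigma> \<noteq> {} \<and> \<not> QBA_gt ND \<Sigma> l \<subseteq> QBA_gt D \<Sigma> m))
       \<and> (\<forall>l::real. 0 \<le> l \<and> l < 1 \<longrightarrow>
            (\<exists>\<Sigma>. finite \<Sigma> \<and> \<Sigma> \<noteq> {} \<and> \<not> QBA_eq1 ND \<Sigma> \<subseteq> QBA_gt D \<Sigma> l))
       \<and> (\<forall>l::real. 0 \<le> l \<and> l < 1 \<longrightarrow>
            (\<exists>\<Sigma>. finite \<Sigma> \<and> \<Sigma> \<noteq> {} \<and> \<not> QBA_eq1 D \<Sigma> \<subseteq> QBA_gt ND \<Sigma> l))"
  using QBA_gt_ND_not_subset_QBA_gt_D QBA_eq1_ND_not_subset_QBA_gt_D QBA_eq1_D_not_subset_QBA_gt_ND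
  by (intro conjI allI impI exI[of _ "{0, 1}"]; simp)

end
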